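(* In the linear deterministic diamond network with a disturbing node with gains $n_1,n_2,n_3,n_4,m$, suppose $n_1>n_2$, $n_4\ge n_3$ and $m\le n_2$. Then the linear capacity is $C=\min(n_1,\ n_4,\ n_2+n_3-m)$.
   Context: The shift matrix $Q$ is the $q\times q$ matrix over $\mathbb{F}_2$ with $Q_{i+1,i}=1$ for $1\le i\le q-1$ and all other entries $0$, where $q=\max(n_1,n_2,n_3,n_4,m)$ and all gains are nonnegative integers. Network: source $S$, relays $A,B$, destination $D$, disturbing node $M$; gains $n_1$ ($S\to A$), $n_2$ ($S\to B$), $n_3$ ($A\to D$), $n_4$ ($B\to D$), $m$ ($M\to A$ and $M\to B$). Each node transmits $x_i\in\mathbb{F}_2^q$ and receives $y_j=\sum_{k:(k,j)\text{ an edge}}Q^{q-n_{(k,j)}}x_k$; relays use linear maps $x_A=G_Ay_A$, $x_B=G_By_B$ with $G_A,G_B$ arbitrary $q\times q$ matrices over $\mathbb{F}_2$. Then $y_D=G_Sx_S+G_Mx_M$ with $G_S=Q^{q-n_3}G_AQ^{q-n_1}+Q^{q-n_4}G_BQ^{q-n_2}$ and $G_M=Q^{q-n_3}G_AQ^{q-m}+Q^{q-n_4}G_BQ^{q-m}$. The rate $R(G_A,G_B)$ is the maximum dimension of a subspace $\mathcal{X}\subseteq\mathbb{F}_2^q$ such that for all $x_S,x_S'\in\mathcal{X}$, $x_M,x_M'\in\mathbb{F}_2^q$, $G_Sx_S+G_Mx_M=G_Sx_S'+G_Mx_M'$ implies $x_S=x_S'$. The linear capacity is $C=\max_{G_A,G_B}R(G_A,G_B)$.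 *)

theory Defs
  imports "Jordan_Normal_Form.VS_Connect" "HOL-Library.Z2"
begin

text \<open>F_2 is the type bit (HOL-Library.Z2). Vectors/matrices are those of
  Jordan_Normal_Form, with 0-based indices.\<close>

definition qdim :: "nat \<Rightarrow> nat \<Rightarrow> nat \<Rightarrow> nat \<Rightarrow> nat \<Rightarrow> nat" where
  "qdim n1 n2 n3 n4 m = max n1 (max n2 (max n3 (max n4 m)))"

text \<open>Shift matrix: Q_{i+1,i} = 1 (1-based), i.e. entry (i+1,i) = 1 (0-based).\<close>
definition shiftQ :: "nat \<Rightarrow> bit mat" where
  "shiftQ q = mat q q (\<lambda>(i, j). if i = Suc j then 1 else 0)"

definition chanS :: "nat \<Rightarrow> nat \<Rightarrow> nat \<Rightarrow> nat \<Rightarrow> nat \<Rightarrow> bit mat \<Rightarrow> bit mat \<Rightarrow> bit mat" where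
  "chanS n1 n2 n3 n4 m GA GB =
    (let q = qdim n1 n2 n3 n4 m; Q = shiftQ q in
       Q ^\<^sub>m (q - n3) * GA * Q ^\<^sub>m (q - n1) + Q ^\<^sub>m (q - n4) * GB * Q ^\<^sub>m (q - n2))"

definition chanM :: "nat \<Rightarrow> nat \<Rightarrow> nat \<Rightarrow> nat \<Rightarrow> nat \<Rightarrow> bit mat \<Rightarrow> bit mat \<Rightarrow> bit mat" where
  "chanM n1 n2 n3 n4 m GA GB =
    (let q = qdim n1 n2 n3 n4 m; Q = shiftQ q in
       Q ^\<^sub>m (q - n3) * GA * Q ^\<^sub>m (q - m) + Q ^\<^sub>m (q - n4) * GB * Q ^\<^sub>m (q - m))"

text \<open>A subspace X of F_2^q is admissible if the source message is decodable
  at D irrespective of the disturbing node's input.\<close>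
definition admissible :: "nat \<Rightarrow> nat \<Rightarrow> nat \<Rightarrow> nat \<Rightarrow> nat \<Rightarrow> bit mat \<Rightarrow> bit mat \<Rightarrow> bit vec set \<Rightarrow> bool" where
  "admissible n1 n2 n3 n4 m GA GB X \<longleftrightarrow>
    (let q = qdim n1 n2 n3 n4 m; GS = chanS n1 n2 n3 n4 m GA GB; GM = chanM n1 n2 n3 n4 m GA GB in
      subspace class_ring X (module_vec TYPE(bit) q) \<and>
      (\<forall>xS\<in>X. \<forall>xS'\<in>X. \<forall>xM\<in>carrier_vec q. \<forall>xM'\<in>carrier_vec q.
         GS *\<^sub>v xS + GM *\<^sub>v xM = GS *\<^sub>v xS' + GM *\<^sub>v xM' \<longrightarrow> xS = xS'))"

definition rate :: "nat \<Rightarrow> nat \<Rightarrow> nat \<Rightarrow> nat \<Rightarrow> nat \<Rightarrow> bit mat \<Rightarrow> bit mat \<Rightarrow> nat" where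
  "rate n1 n2 n3 n4 m GA GB =
    Max {vectorspace.dim class_ring ((module_vec TYPE(bit) (qdim n1 n2 n3 n4 m))\<lparr>carrier := X\<rparr>) | X.
           admissible n1 n2 n3 n4 m GA GB X}"

definition linear_capacity :: "nat \<Rightarrow> nat \<Rightarrow> nat \<Rightarrow> nat \<Rightarrow> nat \<Rightarrow> nat" where
  "linear_capacity n1 n2 n3 n4 m =
    Max {rate n1 n2 n3 n4 m GA GB | GA GB.
           GA \<in> carrier_mat (qdim n1 n2 n3 n4 m) (qdim n1 n2 n3 n4 m) \<and>
           GB \<in> carrier_mat (qdim n1 n2 n3 n4 m) (qdim n1 n2 n3 n4 m)}"

end

theory Submission
  imports Defs
begin

text \<open>
  In the 0-based encoding, a link of gain \<open>n\<close> delivers coordinates \<open>0..<n\<close> of the transmitted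
  vector at positions \<open>q - n..<q\<close> of the receiver.

  Converse: \<open>G\<^sub>S x\<^sub>S\<close> depends only on the coordinates of \<open>x\<^sub>S\<close> below \<open>n\<^sub>1\<close>, and it is supported
  on the last \<open>n\<^sub>4\<close> positions because \<open>n\<^sub>3 \<le> n\<^sub>4\<close>. For the third bound the disturber repeats the
  coordinates \<open>n\<^sub>2 - m..<n\<^sub>2\<close> of \<open>x\<^sub>S\<close>, which cancels them at \<open>B\<close>; what \<open>D\<close> then receives is
  determined by the remaining \<open>n\<^sub>2 - m\<close> positions at \<open>B\<close> and the \<open>n\<^sub>3\<close> positions forwarded by
  \<open>A\<close>, and admissibility still forces it to separate the messages.

  Achievability: \<open>A\<close> forwards its last \<open>n\<^sub>3\<close> positions unchanged. \<open>B\<close> forwards its last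
  \<open>min m n\<^sub>3\<close> positions unchanged, which cancels the disturbance wherever it reaches \<open>D\<close>
  through \<open>A\<close>, and routes its interference-free coordinates into the \<open>n\<^sub>4 - n\<^sub>3\<close> positions of
  \<open>D\<close> below the range of \<open>A\<close>. The source uses its first \<open>min (n\<^sub>1 - n\<^sub>3) (n\<^sub>2 - m) (n\<^sub>4 - n\<^sub>3)\<close>
  coordinates and its last \<open>min n\<^sub>1 n\<^sub>3\<close> coordinates below \<open>n\<^sub>1\<close>. Every used coordinate \<open>j\<close>
  appears at some position of \<open>D\<close> alone or added to coordinate \<open>j - (n\<^sub>1 - n\<^sub>2)\<close>, so \<open>D\<close> decodes
  by induction on \<open>j\<close>.
\<close>

lemma UNIV_bit: "(UNIV :: bit set) = {0, 1}"
  by (auto intro: bit.exhaust)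

instance bit :: finite
  by standard (simp add: UNIV_bit)

text \<open>Keep \<open>bit\<close> arithmetic in field form, so that cancellations \<open>x + x = 0\<close> stay visible.\<close>
declare add_bit_eq_xor [simp del] mult_bit_eq_and [simp del]

lemma bit_add_self [simp]: "(x :: bit) + x = 0"
  by (cases x) simp_all

lemma bit_add_cancel_right: "(a :: bit) + x + (b + x) = a + b"
  by (simp add: algebra_simps)

lemma card_UNIV_bit [simp]: "card (UNIV :: bit set) = 2"
  by (simp add: UNIV_bit)

lemma Max_nat_eqI:
  fixes S :: "nat set"
  assumes "\<And>x. x \<in> S \<Longrightarrow> x \<le> r" and "r \<in> S"
  shows "Max S = r"
  using assms by (intro Max_eqI) (auto simp: finite_nat_set_iff_bounded_le)

section \<open>Finite vector spaces\<close>

lemma (in vectorspace) bij_betw_lincomb_basis: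
  assumes fin: "finite B" and basis: "basis B"
  shows "bij_betw (\<lambda>a. lincomb a B) (B \<rightarrow>\<^sub>E carrier K) (carrier V)"
proof (rule bij_betwI')
  have BV: "B \<subseteq> carrier V" and li: "lin_indpt B" and spanning: "span B = carrier V"
    using basis unfolding basis_def by auto
  {
    fix a b assume a: "a \<in> B \<rightarrow>\<^sub>E carrier K" and b: "b \<in> B \<rightarrow>\<^sub>E carrier K"
    show "(lincomb a B = lincomb b B) = (a = b)"
    proof
      assume eq: "lincomb a B = lincomb b B"
      have "lincomb (\<lambda>v. a v \<ominus>\<^bsub>K\<^esub> b v) B = lincomb a B \<ominus>\<^bsub>V\<^esub> lincomb b B"
        using a b by (intro lincomb_diff[OF fin BV]) auto
      also have "\<dots> = \<zero>\<^bsub>V\<^esub>"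
      proof -
        have "b \<in> B \<rightarrow> carrier K" using b by (auto simp: PiE_iff)
        then show ?thesis using eq M.r_neg[OF lincomb_closed[OF BV]] by (simp add: a_minus_def)
      qed
      finally have zero: "lincomb (\<lambda>v. a v \<ominus>\<^bsub>K\<^esub> b v) B = \<zero>\<^bsub>V\<^esub>" .
      have "a v = b v" if "v \<in> B" for v
      proof (rule ccontr)
        assume "a v \<noteq> b v"
        moreover have "a v \<in> carrier K" "b v \<in> carrier K" using a b that by auto
        then have "a v = (a v \<ominus>\<^bsub>K\<^esub> b v) \<oplus>\<^bsub>K\<^esub> b v"
          by (simp add: a_minus_def R.a_assoc R.l_neg)
        ultimately have "a v \<ominus>\<^bsub>K\<^esub> b v \<noteq> \<zero>\<^bsub>K\<^esub>"
          using \<open>b v \<in> carrier K\<close> by auto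
        then have "lin_dep B"
          using lin_dep_crit[OF fin subset_refl _ that _ zero] a b by auto
        then show False using li by simp
      qed
      then show "a = b" using a b by (auto intro: PiE_ext)
    qed simp
  }
  show "lincomb a B \<in> carrier V" if "a \<in> B \<rightarrow>\<^sub>E carrier K" for a
    using that BV by (intro lincomb_closed) auto
  show "\<exists>a\<in>B \<rightarrow>\<^sub>E carrier K. v = lincomb a B" if v: "v \<in> carrier V" for v
  proof -
    obtain a where a: "a \<in> B \<rightarrow> carrier K" "lincomb a B = v"
      using finite_in_span[OF fin BV] spanning v by auto
    have "lincomb (restrict a B) B = lincomb a B"
      by (rule lincomb_cong[OF refl BV]) (auto simp: a(1))
    then show ?thesis using a by (intro bexI[of _ "restrict a B"]) auto
  qed
qed

lemma (in vectorspace) card_carrier_eq_power_dim: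
  assumes "finite (carrier V)"
  shows "card (carrier V) = card (carrier K) ^ dim"
proof -
  have "span (carrier V) = carrier V"
    using span_is_subset2[of "carrier V"] in_own_span[of "carrier V"] by auto
  then have "fin_dim" unfolding fin_dim_def using assms by auto
  then obtain B where fin: "finite B" and basis: "basis B" using finite_basis_exists by blast
  have "card (carrier V) = card (B \<rightarrow>\<^sub>E carrier K)"
    using bij_betw_lincomb_basis[OF fin basis] by (simp add: bij_betw_same_card)
  also have "\<dots> = card (carrier K) ^ card B" by (simp add: card_PiE fin)
  finally show ?thesis using dim_basis[OF fin basis] by simp
qed

lemma finite_carrier_vec: "finite (carrier_vec n :: 'a :: finite vec set)"
proof -
  have "carrier_vec n \<subseteq> vec_of_list ` {xs :: 'a list. set xs \<subseteq> UNIV \<and> length xs = n}"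
    by (auto intro!: image_eqI[where x = "list_of_vec v" for v] simp: vec_list)
  moreover have "finite {xs :: 'a list. set xs \<subseteq> UNIV \<and> length xs = n}"
    by (rule finite_lists_length_eq) simp
  ultimately show ?thesis by (meson finite_imageI finite_subset)
qed

lemma card_subspace_vec:
  assumes "subspace class_ring X (module_vec TYPE('a :: {finite, field}) n)"
  shows "card X = card (UNIV :: 'a set) ^ vectorspace.dim class_ring ((module_vec TYPE('a) n)\<lparr>carrier := X\<rparr>)"
proof -
  have "X \<subseteq> carrier_vec n"
    using assms unfolding subspace_def submodule_def by (auto simp: module_vec_simps)
  then have "finite X" using finite_carrier_vec finite_subset by blast
  then show ?thesis
    using vectorspace.card_carrier_eq_power_dim[OF vectorspace.subspace_is_vs[OF vec_vs assms]]
    by (simp add: class_ring_simps)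
qed

definition vecs_on :: "nat \<Rightarrow> nat set \<Rightarrow> 'a :: zero vec set" where
  "vecs_on n T = {v \<in> carrier_vec n. \<forall>i<n. i \<notin> T \<longrightarrow> v $ i = 0}"

lemma vecs_on_subset_carrier: "vecs_on n T \<subseteq> carrier_vec n"
  unfolding vecs_on_def by auto

lemma finite_vecs_on: "finite (vecs_on n T :: 'a :: {finite, zero} vec set)"
  using finite_carrier_vec vecs_on_subset_carrier by (rule finite_subset[rotated])

lemma card_vecs_on:
  assumes "T \<subseteq> {..<n}"
  shows "card (vecs_on n T :: 'a :: {finite, zero} vec set) = card (UNIV :: 'a set) ^ card T"
proof -
  have "finite T" using assms finite_subset by blast
  have "bij_betw (\<lambda>v. restrict (\<lambda>i. v $ i) T) (vecs_on n T) (T \<rightarrow>\<^sub>E (UNIV :: 'a set))"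
  proof (rule bij_betwI[where g = "\<lambda>f. vec n (\<lambda>i. if i \<in> T then f i else 0)"])
    fix v :: "'a vec" assume "v \<in> vecs_on n T"
    then show "vec n (\<lambda>i. if i \<in> T then restrict (\<lambda>i. v $ i) T i else 0) = v"
      unfolding vecs_on_def by (intro eq_vecI) auto
  next
    fix f assume f: "f \<in> T \<rightarrow>\<^sub>E (UNIV :: 'a set)"
    show "restrict (\<lambda>i. vec n (\<lambda>i. if i \<in> T then f i else 0) $ i) T = f"
      using f assms by (intro PiE_ext[OF _ f]) auto
  qed (auto simp: vecs_on_def)
  then have "card (vecs_on n T :: 'a vec set) = card (T \<rightarrow>\<^sub>E (UNIV :: 'a set))"
    by (rule bij_betw_same_card)
  also have "\<dots> = card (UNIV :: 'a set) ^ card T" by (simp add: card_PiE \<open>finite T\<close>)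
  finally show ?thesis .
qed

lemma card_le_if_inj_into_vecs_on:
  assumes "inj_on f X" "f ` X \<subseteq> (vecs_on n T :: 'a :: {finite, zero} vec set)" "T \<subseteq> {..<n}"
  shows "card X \<le> card (UNIV :: 'a set) ^ card T"
  using card_mono[OF finite_vecs_on assms(2)] card_image[OF assms(1)] card_vecs_on[OF assms(3), where 'a = 'a]
  by simp

lemma subspace_vecs_on: "subspace class_ring (vecs_on n T) (module_vec TYPE('a :: field) n)"
  by (rule subspace.intro[OF vec_vs], rule submodule.intro[OF vec_module])
    (auto simp: vecs_on_def module_vec_simps)

section \<open>Shift matrices\<close>

definition shift_vec :: "nat \<Rightarrow> nat \<Rightarrow> 'a :: zero vec \<Rightarrow> 'a vec" where
  "shift_vec n k v = vec n (\<lambda>p. if k \<le> p then v $ (p - k) else 0)"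

lemma shift_vec_carrier [simp]: "shift_vec n k v \<in> carrier_vec n"
  and dim_shift_vec [simp]: "dim_vec (shift_vec n k v) = n"
  and index_shift_vec [simp]: "p < n \<Longrightarrow> shift_vec n k v $ p = (if k \<le> p then v $ (p - k) else 0)"
  unfolding shift_vec_def by simp_all

lemma shift_vec_add:
  "u \<in> carrier_vec n \<Longrightarrow> w \<in> carrier_vec n \<Longrightarrow>
    shift_vec n k (u + w) = shift_vec n k u + shift_vec n k (w :: 'a :: monoid_add vec)"
  by (intro eq_vecI) auto

definition select_mat :: "nat \<Rightarrow> (nat \<Rightarrow> nat) \<Rightarrow> (nat \<Rightarrow> bool) \<Rightarrow> 'a :: {zero, one} mat" where
  "select_mat n f P = mat n n (\<lambda>(i, j). if P i \<and> j = f i then 1 else 0)"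

lemma select_mat_carrier [simp]: "select_mat n f P \<in> carrier_mat n n"
  and dim_row_select_mat [simp]: "dim_row (select_mat n f P) = n"
  unfolding select_mat_def by simp_all

lemma select_mat_mult_vec:
  assumes "y \<in> carrier_vec n" "i < n"
  shows "(select_mat n f P *\<^sub>v y) $ i = (if P i \<and> f i < n then y $ f i else (0 :: 'a :: semiring_1))"
proof -
  have "(select_mat n f P *\<^sub>v y) $ i = (\<Sum>j\<in>{0..<n}. (if P i \<and> j = f i then 1 else 0) * y $ j)"
    using assms unfolding select_mat_def by (simp add: scalar_prod_def)
  also have "\<dots> = (\<Sum>j\<in>{0..<n}. if j = f i then (if P i then y $ j else 0) else 0)"
    by (rule sum.cong) auto
  also have "\<dots> = (if P i \<and> f i < n then y $ f i else 0)"
    by (subst sum.delta) auto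
  finally show ?thesis .
qed

lemma shiftQ_eq_select_mat: "shiftQ n = select_mat n (\<lambda>i. i - 1) (\<lambda>i. 1 \<le> i)"
  unfolding shiftQ_def select_mat_def by (rule cong[of "mat n n"]) (auto simp: fun_eq_iff)

lemma shiftQ_carrier [simp]: "shiftQ n \<in> carrier_mat n n"
  unfolding shiftQ_eq_select_mat by simp

lemma shiftQ_pow_mult_vec: "v \<in> carrier_vec n \<Longrightarrow> shiftQ n ^\<^sub>m k *\<^sub>v v = shift_vec n k v"
proof (induction k arbitrary: v)
  case 0
  then show ?case by (intro eq_vecI) (auto simp: shiftQ_def)
next
  case (Suc k)
  have "shiftQ n *\<^sub>v v = shift_vec n 1 v"
    using Suc.prems unfolding shiftQ_eq_select_mat
    by (intro eq_vecI) (auto simp: select_mat_mult_vec simp del: index_mult_mat_vec)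
  then have "shiftQ n ^\<^sub>m Suc k *\<^sub>v v = shift_vec n k (shift_vec n 1 v)"
    using Suc by (simp add: assoc_mult_mat_vec[of _ n n _ n] del: pow_mat.simps add: pow_mat.simps(2))
  also have "\<dots> = shift_vec n (Suc k) v"
    by (intro eq_vecI) auto
  finally show ?case .
qed

lemma shiftQ_relay_carrier:
  "G \<in> carrier_mat n n \<Longrightarrow> shiftQ n ^\<^sub>m a * G * shiftQ n ^\<^sub>m b \<in> carrier_mat n n"
  by (meson mult_carrier_mat pow_carrier_mat shiftQ_carrier)

lemma shiftQ_relay_mult_vec:
  assumes G: "G \<in> carrier_mat n n" and v: "v \<in> carrier_vec n"
  shows "(shiftQ n ^\<^sub>m a * G * shiftQ n ^\<^sub>m b) *\<^sub>v v = shift_vec n a (G *\<^sub>v shift_vec n b v)"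
proof -
  have Qa: "shiftQ n ^\<^sub>m a \<in> carrier_mat n n" and Qb: "shiftQ n ^\<^sub>m b \<in> carrier_mat n n"
    by simp_all
  have "(shiftQ n ^\<^sub>m a * G * shiftQ n ^\<^sub>m b) *\<^sub>v v = (shiftQ n ^\<^sub>m a * G) *\<^sub>v (shiftQ n ^\<^sub>m b *\<^sub>v v)"
    using G v by (intro assoc_mult_mat_vec[OF _ Qb]) auto
  also have "\<dots> = shiftQ n ^\<^sub>m a *\<^sub>v (G *\<^sub>v (shiftQ n ^\<^sub>m b *\<^sub>v v))"
    using G v by (intro assoc_mult_mat_vec[OF Qa G]) (auto simp: mult_mat_vec_carrier[OF Qb v])
  finally show ?thesis
    using G v by (simp add: shiftQ_pow_mult_vec)
qed

section \<open>The signal at the destination\<close>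

locale diamond =
  fixes n1 n2 n3 n4 m :: nat
begin

abbreviation "q \<equiv> qdim n1 n2 n3 n4 m"

lemma le_q: "n1 \<le> q" "n2 \<le> q" "n3 \<le> q" "n4 \<le> q" "m \<le> q"
  unfolding qdim_def by simp_all

context
  fixes GA GB :: "bit mat"
  assumes GA: "GA \<in> carrier_mat q q" and GB: "GB \<in> carrier_mat q q"
begin

lemma chanS_mult_vec:
  "s \<in> carrier_vec q \<Longrightarrow> chanS n1 n2 n3 n4 m GA GB *\<^sub>v s =
    shift_vec q (q - n3) (GA *\<^sub>v shift_vec q (q - n1) s) + shift_vec q (q - n4) (GB *\<^sub>v shift_vec q (q - n2) s)"
  unfolding chanS_def Let_def using GA GB
  by (simp add: add_mult_distrib_mat_vec[OF shiftQ_relay_carrier shiftQ_relay_carrier] shiftQ_relay_mult_vec)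

lemma chanM_mult_vec:
  "z \<in> carrier_vec q \<Longrightarrow> chanM n1 n2 n3 n4 m GA GB *\<^sub>v z =
    shift_vec q (q - n3) (GA *\<^sub>v shift_vec q (q - m) z) + shift_vec q (q - n4) (GB *\<^sub>v shift_vec q (q - m) z)"
  unfolding chanM_def Let_def using GA GB
  by (simp add: add_mult_distrib_mat_vec[OF shiftQ_relay_carrier shiftQ_relay_carrier] shiftQ_relay_mult_vec)

lemma chan_output:
  assumes "s \<in> carrier_vec q" "z \<in> carrier_vec q"
  shows "chanS n1 n2 n3 n4 m GA GB *\<^sub>v s + chanM n1 n2 n3 n4 m GA GB *\<^sub>v z =
    shift_vec q (q - n3) (GA *\<^sub>v (shift_vec q (q - n1) s + shift_vec q (q - m) z)) +
    shift_vec q (q - n4) (GB *\<^sub>v (shift_vec q (q - n2) s + shift_vec q (q - m) z))"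
  using assms GA GB
  by (intro eq_vecI) (auto simp: chanS_mult_vec chanM_mult_vec mult_add_distrib_mat_vec[of _ q q] shift_vec_add)

end

end

section \<open>Converse\<close>

locale diamond_code = diamond +
  fixes GA GB :: "bit mat" and X :: "bit vec set"
  assumes GA: "GA \<in> carrier_mat q q" and GB: "GB \<in> carrier_mat q q"
    and admissible: "admissible n1 n2 n3 n4 m GA GB X"
begin

abbreviation "GS \<equiv> chanS n1 n2 n3 n4 m GA GB"
abbreviation "GM \<equiv> chanM n1 n2 n3 n4 m GA GB"

lemma subspace_X: "subspace class_ring X (module_vec TYPE(bit) q)"
  using admissible unfolding admissible_def Let_def by simp

lemma X_carrier: "X \<subseteq> carrier_vec q"
  using subspace_X unfolding subspace_def submodule_def by (auto simp: module_vec_simps)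

lemma decodable:
  "\<lbrakk>s \<in> X; s' \<in> X; z \<in> carrier_vec q; z' \<in> carrier_vec q; GS *\<^sub>v s + GM *\<^sub>v z = GS *\<^sub>v s' + GM *\<^sub>v z'\<rbrakk>
    \<Longrightarrow> s = s'"
  using admissible unfolding admissible_def Let_def by blast

lemma inj_on_chanS: "inj_on ((*\<^sub>v) GS) X"
  by (rule inj_onI) (use decodable[of _ _ "0\<^sub>v q" "0\<^sub>v q"] X_carrier in auto)

lemma card_le_n1:
  assumes "n2 \<le> n1"
  shows "card X \<le> 2 ^ n1"
proof -
  let ?trunc = "\<lambda>s. vec q (\<lambda>i. if i < n1 then s $ i else 0) :: bit vec"
  have "inj_on ?trunc X"
  proof (rule inj_onI)
    fix s s' assume s: "s \<in> X" "s' \<in> X" and eq: "?trunc s = ?trunc s'"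
    have "s $ i = s' $ i" if "i < n1" for i
      using arg_cong[OF eq, of "\<lambda>v. v $ i"] that le_q by auto
    then have "shift_vec q (q - n1) s = shift_vec q (q - n1) s'"
      and "shift_vec q (q - n2) s = shift_vec q (q - n2) s'"
      using assms le_q by (auto intro!: eq_vecI)
    moreover have "s \<in> carrier_vec q" "s' \<in> carrier_vec q" using s X_carrier by auto
    ultimately have "GS *\<^sub>v s = GS *\<^sub>v s'" by (simp add: chanS_mult_vec[OF GA GB])
    then show "s = s'" using inj_on_chanS s by (auto dest: inj_onD)
  qed
  moreover have "?trunc ` X \<subseteq> vecs_on q {..<n1}" unfolding vecs_on_def by auto
  ultimately show ?thesis
    using card_le_if_inj_into_vecs_on[of ?trunc X q "{..<n1}"] le_q by simp
qed

lemma card_le_n4: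
  assumes "n3 \<le> n4"
  shows "card X \<le> 2 ^ n4"
proof -
  have "(*\<^sub>v) GS ` X \<subseteq> vecs_on q {q - n4..<q}"
    using assms X_carrier by (auto simp: vecs_on_def chanS_mult_vec[OF GA GB])
  moreover have "{q - n4..<q} \<subseteq> {..<q}" by (rule subsetI) simp
  ultimately show ?thesis
    using card_le_if_inj_into_vecs_on[OF inj_on_chanS] le_q by fastforce
qed

lemma card_le_jammed:
  assumes "m \<le> n2"
  shows "card X \<le> 2 ^ (n2 + n3 - m)"
proof -
  define jam :: "bit vec \<Rightarrow> bit vec" where "jam s = vec q (\<lambda>j. if j < m then s $ (n2 - m + j) else 0)" for s
  have jam_carrier: "jam s \<in> carrier_vec q" for s unfolding jam_def by simp
  let ?out = "\<lambda>s. GS *\<^sub>v s + GM *\<^sub>v jam s"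
  have "inj_on ?out X" by (rule inj_onI, erule (1) decodable[OF _ _ jam_carrier jam_carrier])
  let ?W = "vecs_on q {q - n2..<q - m} :: bit vec set" and ?U = "vecs_on q {q - n3..<q} :: bit vec set"
  let ?combine = "\<lambda>(w, u). u + shift_vec q (q - n4) (GB *\<^sub>v w)"
  have "?out ` X \<subseteq> ?combine ` (?W \<times> ?U)"
  proof
    fix v assume "v \<in> ?out ` X"
    then obtain s where s: "s \<in> X" "v = ?out s" by auto
    then have sc: "s \<in> carrier_vec q" using X_carrier by auto
    let ?yA = "shift_vec q (q - n1) s + shift_vec q (q - m) (jam s)"
      and ?yB = "shift_vec q (q - n2) s + shift_vec q (q - m) (jam s)"
    have v: "v = shift_vec q (q - n3) (GA *\<^sub>v ?yA) + shift_vec q (q - n4) (GB *\<^sub>v ?yB)"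
      unfolding s(2) by (rule chan_output[OF GA GB sc jam_carrier])
    have "?yB $ i = 0" if "i < q" "i \<notin> {q - n2..<q - m}" for i
    proof (cases "i < q - n2")
      case False
      with that have M: "q - m \<le> i" by auto
      then have B: "q - n2 \<le> i" and lt: "i - (q - m) < m" using assms le_q \<open>i < q\<close> by linarith+
      have "jam s $ (i - (q - m)) = s $ (n2 - m + (i - (q - m)))"
        unfolding jam_def using lt le_q by simp
      also have "n2 - m + (i - (q - m)) = i - (q - n2)"
        using assms le_q \<open>i < q\<close> M by linarith
      finally show ?thesis using that M B by simp
    qed (use that assms le_q in simp)
    then have "?yB \<in> ?W" unfolding vecs_on_def by simp
    moreover have "shift_vec q (q - n3) (GA *\<^sub>v ?yA) \<in> ?U" unfolding vecs_on_def by simp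
    ultimately show "v \<in> ?combine ` (?W \<times> ?U)" using v by force
  qed
  then have "card (?out ` X) \<le> card (?combine ` (?W \<times> ?U))"
    by (intro card_mono finite_imageI finite_cartesian_product finite_vecs_on)
  also have "\<dots> \<le> card (?W \<times> ?U)"
    by (intro card_image_le finite_cartesian_product finite_vecs_on)
  also have "\<dots> = 2 ^ (n2 - m) * 2 ^ n3"
  proof -
    have "{q - n2..<q - m} \<subseteq> {..<q}" "{q - n3..<q} \<subseteq> {..<q}" by auto
    then show ?thesis
      using card_vecs_on[where 'a = bit] le_q assms by (simp add: card_cartesian_product)
  qed
  also have "\<dots> = 2 ^ (n2 + n3 - m)"
    using assms by (simp add: power_add[symmetric])
  finally show ?thesis using card_image[OF \<open>inj_on ?out X\<close>] by simp
qed

lemma dim_le: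
  assumes "n2 \<le> n1" "n3 \<le> n4" "m \<le> n2"
  shows "vectorspace.dim class_ring ((module_vec TYPE(bit) q)\<lparr>carrier := X\<rparr>) \<le> min n1 (min n4 (n2 + n3 - m))"
proof -
  have "2 ^ vectorspace.dim class_ring ((module_vec TYPE(bit) q)\<lparr>carrier := X\<rparr>) = card X"
    using card_subspace_vec[OF subspace_X] by simp
  also have "\<dots> \<le> 2 ^ min n1 (min n4 (n2 + n3 - m))"
    using card_le_n1 card_le_n4 card_le_jammed assms by (simp add: min_def)
  finally show ?thesis by simp
qed

end

lemma admissible_zero: "admissible n1 n2 n3 n4 m GA GB (vecs_on (qdim n1 n2 n3 n4 m) {})"
  unfolding admissible_def Let_def
  by (intro conjI subspace_vecs_on ballI impI) (auto intro!: eq_vecI simp: vecs_on_def)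

lemma rate_le:
  assumes "n2 \<le> n1" "n3 \<le> n4" "m \<le> n2"
    and "GA \<in> carrier_mat (qdim n1 n2 n3 n4 m) (qdim n1 n2 n3 n4 m)"
    and "GB \<in> carrier_mat (qdim n1 n2 n3 n4 m) (qdim n1 n2 n3 n4 m)"
  shows "rate n1 n2 n3 n4 m GA GB \<le> min n1 (min n4 (n2 + n3 - m))"
proof -
  let ?D = "{vectorspace.dim class_ring ((module_vec TYPE(bit) (qdim n1 n2 n3 n4 m))\<lparr>carrier := X\<rparr>) | X.
    admissible n1 n2 n3 n4 m GA GB X}"
  have "\<forall>d\<in>?D. d \<le> min n1 (min n4 (n2 + n3 - m))"
    using diamond_code.dim_le[OF diamond_code.intro, OF assms(4,5)] assms(1-3) by blast
  moreover have "?D \<noteq> {}" using admissible_zero by blast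
  ultimately show ?thesis
    unfolding rate_def by (subst Max_le_iff) (auto simp: finite_nat_set_iff_bounded_le)
qed

section \<open>Achievability\<close>

locale diamond_scheme = diamond +
  assumes n2_less_n1: "n2 < n1" and n3_le_n4: "n3 \<le> n4" and m_le_n2: "m \<le> n2"
begin

definition "top_start = n1 - min n1 n3"
definition "low_len = min top_start (min (n2 - m) (n4 - n3))"
definition "cancel_len = min m n3"
definition "message_coords = {..<low_len} \<union> {top_start..<n1}"

definition relay_A :: "bit mat" where
  "relay_A = select_mat q (\<lambda>i. i + (q - n3)) (\<lambda>_. True)"

text \<open>Output position \<open>p \<ge> q - n\<^sub>4\<close> of \<open>B\<close> copies its input position \<open>p\<close> in the cancelling range
  and input position \<open>2q - n\<^sub>2 - n\<^sub>3 - 1 - p\<close> below the range of \<open>A\<close>, so that coordinate \<open>j\<close> of the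
  source arrives at position \<open>q - n\<^sub>3 - 1 - j\<close> of \<open>D\<close>.\<close>
definition relay_B :: "bit mat" where
  "relay_B = select_mat q
    (\<lambda>i. if q - cancel_len \<le> i + (q - n4) then i + (q - n4) else 2 * q - n2 - n3 - 1 - (i + (q - n4)))
    (\<lambda>i. q - cancel_len \<le> i + (q - n4) \<or> (q - n3 - low_len \<le> i + (q - n4) \<and> i + (q - n4) < q - n3))"

definition "dest_signal s z =
  chanS n1 n2 n3 n4 m relay_A relay_B *\<^sub>v s + chanM n1 n2 n3 n4 m relay_A relay_B *\<^sub>v z"

lemma low_len_le: "low_len \<le> top_start" "low_len \<le> n2 - m" "low_len \<le> n4 - n3"
  unfolding low_len_def by simp_all

lemma relay_A_carrier: "relay_A \<in> carrier_mat q q"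
  and relay_B_carrier: "relay_B \<in> carrier_mat q q"
  unfolding relay_A_def relay_B_def by simp_all

lemma index_dest_signal:
  assumes s: "s \<in> carrier_vec q" and z: "z \<in> carrier_vec q" and p: "p < q"
  defines "yA \<equiv> shift_vec q (q - n1) s + shift_vec q (q - m) z"
    and "yB \<equiv> shift_vec q (q - n2) s + shift_vec q (q - m) z"
  shows "dest_signal s z $ p = (if q - n3 \<le> p then yA $ p else 0) +
    (if q - cancel_len \<le> p then yB $ p
     else if q - n3 - low_len \<le> p \<and> p < q - n3 then yB $ (2 * q - n2 - n3 - 1 - p) else 0)"
proof -
  have yA: "yA \<in> carrier_vec q" and yB: "yB \<in> carrier_vec q"
    unfolding yA_def yB_def by simp_all
  have "shift_vec q (q - n3) (relay_A *\<^sub>v yA) $ p = (if q - n3 \<le> p then yA $ p else 0)"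
    using p yA by (auto simp: relay_A_def select_mat_mult_vec simp del: index_mult_mat_vec)
  moreover have "shift_vec q (q - n4) (relay_B *\<^sub>v yB) $ p =
    (if q - cancel_len \<le> p then yB $ p
     else if q - n3 - low_len \<le> p \<and> p < q - n3 then yB $ (2 * q - n2 - n3 - 1 - p) else 0)"
  proof (cases "q - n4 \<le> p")
    case True
    have lt: "p - (q - n4) < q" and eq: "p - (q - n4) + (q - n4) = p" using True p by simp_all
    have "shift_vec q (q - n4) (relay_B *\<^sub>v yB) $ p = (relay_B *\<^sub>v yB) $ (p - (q - n4))"
      using True p by simp
    also have "\<dots> = (if (q - cancel_len \<le> p \<or> (q - n3 - low_len \<le> p \<and> p < q - n3)) \<and>
        (if q - cancel_len \<le> p then p else 2 * q - n2 - n3 - 1 - p) < q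
       then yB $ (if q - cancel_len \<le> p then p else 2 * q - n2 - n3 - 1 - p) else 0)"
      unfolding relay_B_def select_mat_mult_vec[OF yB lt] eq ..
    moreover have "2 * q - n2 - n3 - 1 - p < q" if "q - n3 - low_len \<le> p"
      using that p le_q n3_le_n4 low_len_le by linarith
    ultimately show ?thesis using p by auto
  next
    case False
    then show ?thesis using p n3_le_n4 by (auto simp: cancel_len_def low_len_def)
  qed
  ultimately show ?thesis
    unfolding dest_signal_def yA_def yB_def
    using chan_output[OF relay_A_carrier relay_B_carrier s z] p by simp
qed

lemma dest_signal_low:
  assumes s: "s \<in> carrier_vec q" and z: "z \<in> carrier_vec q" and j: "j < low_len"
  shows "dest_signal s z $ (q - n3 - 1 - j) = s $ j"
proof -
  let ?p = "q - n3 - 1 - j"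
  have p: "?p < q" and p_low: "q - n3 - low_len \<le> ?p" "?p < q - n3"
    using j low_len_le le_q n3_le_n4 by linarith+
  have "\<not> q - cancel_len \<le> ?p" using p_low(2) unfolding cancel_len_def by linarith
  then have "dest_signal s z $ ?p =
      (shift_vec q (q - n2) s + shift_vec q (q - m) z) $ (2 * q - n2 - n3 - 1 - ?p)"
    unfolding index_dest_signal[OF s z p] using p_low by simp
  also have "2 * q - n2 - n3 - 1 - ?p = q - n2 + j"
    using j low_len_le le_q n3_le_n4 by linarith
  also have "(shift_vec q (q - n2) s + shift_vec q (q - m) z) $ (q - n2 + j) = s $ j"
  proof -
    have "q - n2 + j < q - m" "q - n2 \<le> q - n2 + j" using j low_len_le le_q m_le_n2 by linarith+
    then show ?thesis by simp
  qed
  finally show ?thesis .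
qed

lemma dest_signal_cancelled:
  assumes s: "s \<in> carrier_vec q" and z: "z \<in> carrier_vec q" and j: "top_start \<le> j" "j < n1"
    and cancel: "q - cancel_len \<le> q - n1 + j"
  shows "dest_signal s z $ (q - n1 + j) = s $ j + s $ (j - (n1 - n2))"
proof -
  let ?p = "q - n1 + j"
  have p: "?p < q" using j le_q by linarith
  have A: "q - n3 \<le> ?p" and M: "q - m \<le> ?p" and B: "q - n2 \<le> ?p"
    using cancel m_le_n2 le_q j unfolding cancel_len_def by linarith+
  have "dest_signal s z $ ?p =
      (shift_vec q (q - n1) s + shift_vec q (q - m) z) $ ?p + (shift_vec q (q - n2) s + shift_vec q (q - m) z) $ ?p"
    unfolding index_dest_signal[OF s z p] by (simp only: if_P[OF A] if_P[OF cancel])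
  also have "\<dots> = (s $ j + z $ (?p - (q - m))) + (s $ (j - (n1 - n2)) + z $ (?p - (q - m)))"
  proof -
    have j1: "?p - (q - n1) = j" and j2: "?p - (q - n2) = j - (n1 - n2)"
      using B le_q n2_less_n1 by linarith+
    have "shift_vec q (q - n1) s $ ?p = s $ j"
      using p by (subst index_shift_vec) (simp_all only: j1 le_add1 if_True)
    moreover have "shift_vec q (q - n2) s $ ?p = s $ (j - (n1 - n2))"
      using p B by (subst index_shift_vec) (simp_all only: j2 if_True)
    moreover have "shift_vec q (q - m) z $ ?p = z $ (?p - (q - m))"
      using p M by (subst index_shift_vec) (simp_all only: if_True)
    ultimately show ?thesis
      using p by (simp only: index_add_vec(1) dim_shift_vec)
  qed
  also have "\<dots> = s $ j + s $ (j - (n1 - n2))"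
    by (rule bit_add_cancel_right)
  finally show ?thesis .
qed

lemma dest_signal_top:
  assumes s: "s \<in> carrier_vec q" and z: "z \<in> carrier_vec q" and j: "top_start \<le> j" "j < n1"
    and no_cancel: "\<not> q - cancel_len \<le> q - n1 + j"
  shows "dest_signal s z $ (q - n1 + j) = s $ j"
proof -
  let ?p = "q - n1 + j"
  have p: "?p < q" using j le_q by linarith
  have A: "q - n3 \<le> ?p" and not_low: "\<not> (q - n3 - low_len \<le> ?p \<and> ?p < q - n3)"
    and not_M: "\<not> q - m \<le> ?p"
    using j no_cancel le_q unfolding top_start_def cancel_len_def by linarith+
  have "dest_signal s z $ ?p = (shift_vec q (q - n1) s + shift_vec q (q - m) z) $ ?p"
    unfolding index_dest_signal[OF s z p]
    by (simp only: if_P[OF A] if_not_P[OF no_cancel] if_not_P[OF not_low] add_0_right)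
  also have "\<dots> = s $ j"
  proof -
    have j1: "?p - (q - n1) = j" using le_q by linarith
    have "shift_vec q (q - n1) s $ ?p = s $ j"
      using p by (subst index_shift_vec) (simp_all only: j1 le_add1 if_True)
    moreover have "shift_vec q (q - m) z $ ?p = 0"
      using p not_M by simp
    ultimately show ?thesis
      using p by (simp only: index_add_vec(1) dim_shift_vec add_0_right)
  qed
  finally show ?thesis .
qed

lemma message_coords_subset: "message_coords \<subseteq> {..<q}"
  using low_len_le le_q unfolding message_coords_def top_start_def by auto

lemma card_message_coords: "card message_coords = min n1 (min n4 (n2 + n3 - m))"
proof -
  have "card message_coords = card {..<low_len} + card {top_start..<n1}"
    unfolding message_coords_def using low_len_le by (intro card_Un_disjoint) auto
  also have "\<dots> = min n1 (min n4 (n2 + n3 - m))"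
    using n2_less_n1 n3_le_n4 m_le_n2 unfolding low_len_def top_start_def
    by (cases "n3 \<le> n1"; simp add: min_def; linarith)
  finally show ?thesis .
qed

lemma dest_signal_determines_coord:
  assumes s: "s \<in> carrier_vec q" and s': "s' \<in> carrier_vec q"
    and z: "z \<in> carrier_vec q" and z': "z' \<in> carrier_vec q"
    and eq: "dest_signal s z = dest_signal s' z'"
    and j: "j \<in> message_coords" and below: "\<And>i. i < j \<Longrightarrow> s $ i = s' $ i"
  shows "s $ j = s' $ j"
proof -
  consider "j < low_len" | "top_start \<le> j" "j < n1"
    using j unfolding message_coords_def by auto
  then show ?thesis
  proof cases
    case 1
    then show ?thesis using dest_signal_low[OF s z] dest_signal_low[OF s' z'] eq by metis
  next
    case 2
    show ?thesis
    proof (cases "q - cancel_len \<le> q - n1 + j")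
      case True
      then have "n1 - n2 \<le> j"
        using 2 m_le_n2 le_q unfolding cancel_len_def by linarith
      then have "s $ (j - (n1 - n2)) = s' $ (j - (n1 - n2))"
        using below n2_less_n1 by simp
      then show ?thesis
        using dest_signal_cancelled[OF s z 2 True] dest_signal_cancelled[OF s' z' 2 True] eq
        by (metis add_right_cancel)
    next
      case False
      then show ?thesis
        using dest_signal_top[OF s z 2 False] dest_signal_top[OF s' z' 2 False] eq by metis
    qed
  qed
qed

lemma dest_signal_decodable:
  assumes s: "s \<in> vecs_on q message_coords" and s': "s' \<in> vecs_on q message_coords"
    and z: "z \<in> carrier_vec q" and z': "z' \<in> carrier_vec q"
    and eq: "dest_signal s z = dest_signal s' z'"
  shows "s = s'"
proof -
  have sc: "s \<in> carrier_vec q" "s' \<in> carrier_vec q"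
    using s s' vecs_on_subset_carrier by auto
  have "s $ j = s' $ j" if "j < q" for j
    using that
  proof (induction j rule: less_induct)
    case (less j)
    show ?case
    proof (cases "j \<in> message_coords")
      case True
      show ?thesis by (rule dest_signal_determines_coord[OF sc z z' eq True]) (use less in auto)
    next
      case False
      then show ?thesis using s s' \<open>j < q\<close> unfolding vecs_on_def by auto
    qed
  qed
  then show ?thesis using sc by (intro eq_vecI) auto
qed

lemma admissible_message_coords:
  "admissible n1 n2 n3 n4 m relay_A relay_B (vecs_on q message_coords)"
  unfolding admissible_def Let_def
proof (intro conjI ballI impI subspace_vecs_on)
  fix s s' z z'
  assume "s \<in> vecs_on q message_coords" "s' \<in> vecs_on q message_coords"
    "z \<in> carrier_vec q" "z' \<in> carrier_vec q"
    "chanS n1 n2 n3 n4 m relay_A relay_B *\<^sub>v s + chanM n1 n2 n3 n4 m relay_A relay_B *\<^sub>v z =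
     chanS n1 n2 n3 n4 m relay_A relay_B *\<^sub>v s' + chanM n1 n2 n3 n4 m relay_A relay_B *\<^sub>v z'"
  then show "s = s'" unfolding dest_signal_def[symmetric] by (rule dest_signal_decodable)
qed

lemma rate_relays: "rate n1 n2 n3 n4 m relay_A relay_B = min n1 (min n4 (n2 + n3 - m))"
  unfolding rate_def
proof (rule Max_nat_eqI)
  fix d
  assume "d \<in> {vectorspace.dim class_ring ((module_vec TYPE(bit) q)\<lparr>carrier := X\<rparr>) | X.
    admissible n1 n2 n3 n4 m relay_A relay_B X}"
  then show "d \<le> min n1 (min n4 (n2 + n3 - m))"
    using diamond_code.dim_le[OF diamond_code.intro, OF relay_A_carrier relay_B_carrier]
      n2_less_n1 n3_le_n4 m_le_n2 by fastforce
next
  have "(2 :: nat) ^ vectorspace.dim class_ring ((module_vec TYPE(bit) q)\<lparr>carrier := vecs_on q message_coords\<rparr>)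
    = 2 ^ min n1 (min n4 (n2 + n3 - m))"
    using card_subspace_vec[OF subspace_vecs_on, where 'a = bit]
      card_vecs_on[OF message_coords_subset, where 'a = bit] card_message_coords by simp
  then have "vectorspace.dim class_ring ((module_vec TYPE(bit) q)\<lparr>carrier := vecs_on q message_coords\<rparr>)
    = min n1 (min n4 (n2 + n3 - m))"
    by (rule power_inject_exp[THEN iffD1, rotated]) simp
  then show "min n1 (min n4 (n2 + n3 - m)) \<in> {vectorspace.dim class_ring ((module_vec TYPE(bit) q)\<lparr>carrier := X\<rparr>) | X.
    admissible n1 n2 n3 n4 m relay_A relay_B X}"
    using admissible_message_coords by (intro CollectI exI[of _ "vecs_on q message_coords"]) simp
qed

end

theorem mainTheorem6:
  fixes n1 n2 n3 n4 m :: nat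
  assumes "n1 > n2" and "n4 \<ge> n3" and "m \<le> n2"
  shows "linear_capacity n1 n2 n3 n4 m = min n1 (min n4 (n2 + n3 - m))"
proof -
  interpret diamond_scheme n1 n2 n3 n4 m
    using assms by unfold_locales
  show ?thesis
    unfolding linear_capacity_def
  proof (rule Max_nat_eqI)
    fix r assume "r \<in> {rate n1 n2 n3 n4 m GA GB | GA GB. GA \<in> carrier_mat q q \<and> GB \<in> carrier_mat q q}"
    then show "r \<le> min n1 (min n4 (n2 + n3 - m))"
      using rate_le assms by fastforce
  next
    show "min n1 (min n4 (n2 + n3 - m)) \<in>
      {rate n1 n2 n3 n4 m GA GB | GA GB. GA \<in> carrier_mat q q \<and> GB \<in> carrier_mat q q}"
      by (intro CollectI exI[of _ relay_A] exI[of _ relay_B] conjI)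
        (simp_all add: rate_relays relay_A_carrier relay_B_carrier)
  qed
qed

end
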